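(* Let $P$ be a $3$-nice twisted $n$-gon with corner invariants $(x_0,\dots,x_{2n-1})$ (indices taken modulo $2n$), and let $P'$ be the twisted $n$-gon defined by $P'_i=P_{i-2}P_{i+1}\cap P_{i-1}P_{i+2}$, with corner invariants $(x'_0,\dots,x'_{2n-1})$. Then, whenever all quantities involved are finite and the denominators are nonzero, for every $i$: $$x'_{2i}=x_{2i-2}\cdot\frac{x_{2i-4}+x_{2i-1}-1}{x_{2i-2}x_{2i-1}-(1-x_{2i+1})(1-x_{2i-4})},\qquad x'_{2i+1}=x_{2i+3}\cdot\frac{x_{2i+2}+x_{2i+5}-1}{x_{2i+2}x_{2i+3}-(1-x_{2i+5})(1-x_{2i})}.$$
   Context: A twisted $n$-gon is a map $P:\mathbb{Z}\to\mathbb{RP}^2$ with every three consecutive points non-collinear and $P_{i+n}=M(P_i)$ for a fixed $M\in\mathrm{PGL}_3(\mathbb{R})$. $P$ is $3$-nice if $P_i,P_{i+1},P_{i+3},P_{i+4}$ are in general position for every $i$. $XY$ denotes the line through $X$ and $Y$. (The map $P\mapsto P'$ is the deep diagonal map $T_3$ with an index shift.) Inverse cross ratio: for four collinear points $A,B,C,D$, map their line projectively to the $x$-axis with coordinates $a,b,c,d$ and set $\chi(A,B,C,D)=\frac{(a-b)(c-d)}{(a-c)(b-d)}$ (value in $\mathbb{R}\cup\{\infty\}$, projectively invariant). Corner invariants: $x_{2i}=\chi(P_{i-2},P_{i-1},P_{i-2}P_{i-1}\cap P_iP_{i+1},P_{i-2}P_{i-1}\cap P_{i+1}P_{i+2})$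 and $x_{2i+1}=\chi(P_{i+2},P_{i+1},P_{i+2}P_{i+1}\cap P_iP_{i-1},P_{i+2}P_{i+1}\cap P_{i-1}P_{i-2})$, with $x_{j+2n}=x_j$. *)

theory Defs
  imports "HOL-Analysis.Analysis"
begin

text \<open>Points of RP^2 are represented by nonzero vectors of real^3 (homogeneous coordinates).
  Lines are represented by their normal vectors; the line through X and Y is cross3 X Y,
  and the intersection point of two lines L1, L2 is cross3 L1 L2.\<close>

definition proj_collinear :: "real^3 \<Rightarrow> real^3 \<Rightarrow> real^3 \<Rightarrow> bool" where
  "proj_collinear a b c \<longleftrightarrow> (cross3 a b) \<bullet> c = 0"

definition line_through :: "real^3 \<Rightarrow> real^3 \<Rightarrow> real^3" where
  "line_through X Y = cross3 X Y"

definition meet :: "real^3 \<Rightarrow> real^3 \<Rightarrow> real^3 \<Rightarrow> real^3 \<Rightarrow> real^3" where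
  "meet A B C D = cross3 (line_through A B) (line_through C D)"

definition twisted_ngon :: "nat \<Rightarrow> (int \<Rightarrow> real^3) \<Rightarrow> bool" where
  "twisted_ngon n P \<longleftrightarrow> n > 0 \<and> (\<forall>i. P i \<noteq> 0) \<and>
     (\<forall>i. \<not> proj_collinear (P i) (P (i+1)) (P (i+2))) \<and>
     (\<exists>M::real^3^3. invertible M \<and> (\<forall>i. \<exists>c::real. c \<noteq> 0 \<and> P (i + int n) = c *\<^sub>R (M *v P i)))"

definition general_position4 :: "real^3 \<Rightarrow> real^3 \<Rightarrow> real^3 \<Rightarrow> real^3 \<Rightarrow> bool" where
  "general_position4 A B C D \<longleftrightarrow> A \<noteq> 0 \<and> B \<noteq> 0 \<and> C \<noteq> 0 \<and> D \<noteq> 0 \<and>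
     \<not> proj_collinear A B C \<and> \<not> proj_collinear A B D \<and>
     \<not> proj_collinear A C D \<and> \<not> proj_collinear B C D"

definition three_nice :: "(int \<Rightarrow> real^3) \<Rightarrow> bool" where
  "three_nice P \<longleftrightarrow> (\<forall>i. general_position4 (P i) (P (i+1)) (P (i+3)) (P (i+4)))"

text \<open>Inverse cross ratio of four collinear points. For collinear A,B,C,D all the cross products
  below are multiples of the common line's normal, and the quotient equals
  (a-b)(c-d)/((a-c)(b-d)) in any affine coordinate on the line. The value is finite iff
  chi_den A B C D \<noteq> 0.\<close>
definition chi_num :: "real^3 \<Rightarrow> real^3 \<Rightarrow> real^3 \<Rightarrow> real^3 \<Rightarrow> real" where
  "chi_num A B C D = (cross3 A B) \<bullet> (cross3 C D)"

definition chi_den :: "real^3 \<Rightarrow> real^3 \<Rightarrow> real^3 \<Rightarrow> real^3 \<Rightarrow> real" where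
  "chi_den A B C D = (cross3 A C) \<bullet> (cross3 B D)"

definition chi :: "real^3 \<Rightarrow> real^3 \<Rightarrow> real^3 \<Rightarrow> real^3 \<Rightarrow> real" where
  "chi A B C D = chi_num A B C D / chi_den A B C D"

definition corner_pts :: "(int \<Rightarrow> real^3) \<Rightarrow> int \<Rightarrow> (real^3, (real^3, (real^3, real^3) prod) prod) prod" where
  "corner_pts P j = (let i = j div 2 in
     if even j then
       (P (i-2), P (i-1), meet (P (i-2)) (P (i-1)) (P i) (P (i+1)),
                          meet (P (i-2)) (P (i-1)) (P (i+1)) (P (i+2)))
     else
       (P (i+2), P (i+1), meet (P (i+2)) (P (i+1)) (P i) (P (i-1)),
                          meet (P (i+2)) (P (i+1)) (P (i-1)) (P (i-2))))"

definition corner :: "(int \<Rightarrow> real^3) \<Rightarrow> int \<Rightarrow> real" where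
  "corner P j = (case corner_pts P j of (A,B,C,D) \<Rightarrow> chi A B C D)"

definition corner_finite :: "(int \<Rightarrow> real^3) \<Rightarrow> int \<Rightarrow> bool" where
  "corner_finite P j = (case corner_pts P j of (A,B,C,D) \<Rightarrow> chi_den A B C D \<noteq> 0)"

definition T3 :: "(int \<Rightarrow> real^3) \<Rightarrow> int \<Rightarrow> real^3" where
  "T3 P i = meet (P (i-2)) (P (i+1)) (P (i-1)) (P (i+2))"

end

theory Submission
  imports Defs
begin

text \<open>Write [a b c] for the bracket (a \<times> b) \<bullet> c. Each corner invariant of P is a ratio of
  products of brackets of consecutive vertices. So is the corner invariant x'_{2i} of P': the points
  P'_{i-2}, P'_{i-1} and the two intersection points defining x'_{2i} all lie on the line
  P_{i-3}P_i, and the cross ratio can be read off in coordinates on that line. The claimed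
  recurrence then becomes a polynomial identity between brackets of the seven vertices
  P_{i-4}, ..., P_{i+2}; since a linear map multiplies every bracket by its determinant, it suffices
  to check it when P_{i-3}, P_{i-1}, P_i is the standard basis, and 3-niceness guarantees that these
  three vertices are linearly independent.
  The odd indices follow by reversing the orientation of the polygon, which exchanges x_j and x_{1-j}.
  The formula is local.\<close>

definition det3 :: "real^3 \<Rightarrow> real^3 \<Rightarrow> real^3 \<Rightarrow> real" where
  "det3 a b c = cross3 a b \<bullet> c"

lemma det3_matrix_vector_mult: "det3 (M *v x) (M *v y) (M *v z) = det M * det3 x y z"
proof -
  have "cross3 (M *v x) (M *v y) v* M = det M *\<^sub>R cross3 x y"
    using cross_matrix_mult[of M x y] by simp
  then show ?thesis
    unfolding det3_def by (simp add: dot_lmul_matrix[symmetric])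
qed

lemma meet_eq_first_line: "meet A B X Y = det3 X Y A *\<^sub>R B - det3 X Y B *\<^sub>R A"
  unfolding meet_def line_through_def det3_def by (simp add: cross3_simps forall_3)

lemma meet_eq_second_line: "meet A B X Y = det3 A B Y *\<^sub>R X - det3 A B X *\<^sub>R Y"
  unfolding meet_def line_through_def det3_def by (simp add: cross3_simps forall_3)

lemma meet_scaled_lines:
  assumes "cross3 A B = s *\<^sub>R cross3 U V" and "cross3 C D = t *\<^sub>R cross3 X Y"
  shows "meet A B C D = (s * t) *\<^sub>R meet U V X Y"
  unfolding meet_def line_through_def assms by (simp add: cross_mult_left cross_mult_right)

lemma cross3_lincomb:
  "cross3 (a1 *\<^sub>R U + a2 *\<^sub>R V) (b1 *\<^sub>R U + b2 *\<^sub>R V) = (a1 * b2 - a2 * b1) *\<^sub>R cross3 U V"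
  by (simp add: cross3_simps forall_3)

lemma chi_lincomb:
  assumes "A = a1 *\<^sub>R U + a2 *\<^sub>R V" "B = b1 *\<^sub>R U + b2 *\<^sub>R V"
    "C = c1 *\<^sub>R U + c2 *\<^sub>R V" "D = d1 *\<^sub>R U + d2 *\<^sub>R V"
  shows "chi_num A B C D = (a1 * b2 - a2 * b1) * (c1 * d2 - c2 * d1) * (cross3 U V \<bullet> cross3 U V)"
    "chi_den A B C D = (a1 * c2 - a2 * c1) * (b1 * d2 - b2 * d1) * (cross3 U V \<bullet> cross3 U V)"
  unfolding chi_num_def chi_den_def assms cross3_lincomb by simp_all

text \<open>Numerator and denominator of \<chi>(A, B, AB \<inter> XY, AB \<inter> X'Y') after cancelling
  the common factor |A \<times> B|^2 (see chi_meets).\<close>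
definition meet_chi_num :: "real^3 \<Rightarrow> real^3 \<Rightarrow> real^3 \<Rightarrow> real^3 \<Rightarrow> real^3 \<Rightarrow> real^3 \<Rightarrow> real" where
  "meet_chi_num A B X Y X' Y' = det3 X Y A * det3 X' Y' B - det3 X Y B * det3 X' Y' A"

definition meet_chi_den :: "real^3 \<Rightarrow> real^3 \<Rightarrow> real^3 \<Rightarrow> real^3 \<Rightarrow> real^3 \<Rightarrow> real^3 \<Rightarrow> real" where
  "meet_chi_den A B X Y X' Y' = det3 X Y A * det3 X' Y' B"

lemma chi_meets:
  "chi_num A B (meet A B X Y) (meet A B X' Y') = meet_chi_num A B X Y X' Y' * (cross3 A B \<bullet> cross3 A B)"
  "chi_den A B (meet A B X Y) (meet A B X' Y') = meet_chi_den A B X Y X' Y' * (cross3 A B \<bullet> cross3 A B)"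
proof -
  have "A = 1 *\<^sub>R A + 0 *\<^sub>R B" "B = 0 *\<^sub>R A + 1 *\<^sub>R B"
    "meet A B X Y = (- det3 X Y B) *\<^sub>R A + det3 X Y A *\<^sub>R B"
    "meet A B X' Y' = (- det3 X' Y' B) *\<^sub>R A + det3 X' Y' A *\<^sub>R B"
    by (simp_all add: meet_eq_first_line)
  note coords = chi_lincomb[OF this]
  show "chi_num A B (meet A B X Y) (meet A B X' Y') = meet_chi_num A B X Y X' Y' * (cross3 A B \<bullet> cross3 A B)"
    unfolding coords meet_chi_num_def by (simp add: algebra_simps)
  show "chi_den A B (meet A B X Y) (meet A B X' Y') = meet_chi_den A B X Y X' Y' * (cross3 A B \<bullet> cross3 A B)"
    unfolding coords meet_chi_den_def by simp
qed

lemma chi_meets_eq: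
  assumes "chi_den A B (meet A B X Y) (meet A B X' Y') \<noteq> 0"
  shows "chi A B (meet A B X Y) (meet A B X' Y') = meet_chi_num A B X Y X' Y' / meet_chi_den A B X Y X' Y'"
    "meet_chi_den A B X Y X' Y' \<noteq> 0"
  using assms unfolding chi_def chi_meets by auto

lemma corner_even_eq:
  assumes "corner_finite P (2*k)"
  shows "corner P (2*k) = meet_chi_num (P (k-2)) (P (k-1)) (P k) (P (k+1)) (P (k+1)) (P (k+2))
                        / meet_chi_den (P (k-2)) (P (k-1)) (P k) (P (k+1)) (P (k+1)) (P (k+2))"
    "meet_chi_den (P (k-2)) (P (k-1)) (P k) (P (k+1)) (P (k+1)) (P (k+2)) \<noteq> 0"
  using chi_meets_eq assms unfolding corner_def corner_finite_def corner_pts_def by simp_all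

lemma corner_odd_eq:
  assumes "corner_finite P (2*k+1)"
  shows "corner P (2*k+1) = meet_chi_num (P (k+2)) (P (k+1)) (P k) (P (k-1)) (P (k-1)) (P (k-2))
                          / meet_chi_den (P (k+2)) (P (k+1)) (P k) (P (k-1)) (P (k-1)) (P (k-2))"
    "meet_chi_den (P (k+2)) (P (k+1)) (P k) (P (k-1)) (P (k-1)) (P (k-2)) \<noteq> 0"
  using chi_meets_eq assms unfolding corner_def corner_finite_def corner_pts_def by simp_all

lemma cross3_T3_consecutive:
  "\<exists>t. cross3 (T3 P k) (T3 P (k+1)) = t *\<^sub>R cross3 (P (k-1)) (P (k+2))"
proof -
  have idx: "k+1-2 = k-1" "k+1+1 = k+2" "k+1-1 = k" "k+1+2 = k+3" by simp_all
  have "T3 P k = det3 (P (k-2)) (P (k+1)) (P (k+2)) *\<^sub>R P (k-1)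
      + (- det3 (P (k-2)) (P (k+1)) (P (k-1))) *\<^sub>R P (k+2)"
    unfolding T3_def meet_eq_second_line by simp
  moreover have "T3 P (k+1) = (- det3 (P k) (P (k+3)) (P (k+2))) *\<^sub>R P (k-1)
      + det3 (P k) (P (k+3)) (P (k-1)) *\<^sub>R P (k+2)"
    unfolding T3_def idx meet_eq_first_line by simp
  ultimately show ?thesis
    using cross3_lincomb by metis
qed

lemma corner_T3_even_eq:
  fixes P :: "int \<Rightarrow> real^3"
  assumes "corner_finite (T3 P) (2*i)"
  defines "a \<equiv> P (i-4)" and "b \<equiv> P (i-3)" and "c \<equiv> P (i-2)" and "d \<equiv> P (i-1)"
    and "e \<equiv> P i" and "f \<equiv> P (i+1)" and "g \<equiv> P (i+2)"
  shows "corner (T3 P) (2*i) = meet_chi_num e b a d c f * det3 d g e / (meet_chi_num e b a d d g * det3 c f e)"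
    "meet_chi_num e b a d d g * det3 c f e \<noteq> 0"
proof -
  have idx: "i-2-2 = i-4" "i-2+1 = i-1" "i-2-1 = i-3" "i-2+2 = i"
     "i-1-2 = i-3" "i-1+1 = i" "i-1-1 = i-2" "i-1+2 = i+1" "i+1+1 = i+2" "i+1-1 = i" "i+1+2 = i+3"
    by simp_all
  have A: "T3 P (i-2) = det3 a d e *\<^sub>R b + (- det3 a d b) *\<^sub>R e"
    unfolding T3_def idx meet_eq_second_line assms by simp
  have B: "T3 P (i-1) = (- det3 c f e) *\<^sub>R b + det3 c f b *\<^sub>R e"
    unfolding T3_def idx meet_eq_first_line assms by simp
  obtain s where s: "cross3 (T3 P (i-2)) (T3 P (i-1)) = s *\<^sub>R cross3 b e"
    using cross3_T3_consecutive[of P "i-2"] unfolding idx assms by auto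
  obtain t where t: "cross3 (T3 P i) (T3 P (i+1)) = t *\<^sub>R cross3 d g"
    using cross3_T3_consecutive[of P i] unfolding assms by auto
  obtain t' where t': "cross3 (T3 P (i+1)) (T3 P (i+2)) = t' *\<^sub>R cross3 e (P (i+3))"
    using cross3_T3_consecutive[of P "i+1"] unfolding idx assms by auto
  have "meet (T3 P (i-2)) (T3 P (i-1)) (T3 P i) (T3 P (i+1)) = (s * t) *\<^sub>R meet b e d g"
    by (rule meet_scaled_lines[OF s t])
  also have "\<dots> = (- (s * t * det3 d g e)) *\<^sub>R b + (s * t * det3 d g b) *\<^sub>R e"
    by (simp add: meet_eq_first_line algebra_simps)
  finally have C: "meet (T3 P (i-2)) (T3 P (i-1)) (T3 P i) (T3 P (i+1))
      = (- (s * t * det3 d g e)) *\<^sub>R b + (s * t * det3 d g b) *\<^sub>R e" .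
  have "meet (T3 P (i-2)) (T3 P (i-1)) (T3 P (i+1)) (T3 P (i+2)) = (s * t') *\<^sub>R meet b e e (P (i+3))"
    by (rule meet_scaled_lines[OF s t'])
  also have "\<dots> = 0 *\<^sub>R b + (s * t' * det3 e (P (i+3)) b) *\<^sub>R e"
    by (simp add: meet_eq_first_line det3_def dot_cross_self)
  finally have D: "meet (T3 P (i-2)) (T3 P (i-1)) (T3 P (i+1)) (T3 P (i+2))
      = 0 *\<^sub>R b + (s * t' * det3 e (P (i+3)) b) *\<^sub>R e" .
  have pts: "corner_pts (T3 P) (2*i) = (T3 P (i-2), T3 P (i-1),
      meet (T3 P (i-2)) (T3 P (i-1)) (T3 P i) (T3 P (i+1)),
      meet (T3 P (i-2)) (T3 P (i-1)) (T3 P (i+1)) (T3 P (i+2)))"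
    unfolding corner_pts_def by simp
  note coords = chi_lincomb[OF A B C D]
  have den_nz: "chi_den (T3 P (i-2)) (T3 P (i-1)) (meet (T3 P (i-2)) (T3 P (i-1)) (T3 P i) (T3 P (i+1)))
       (meet (T3 P (i-2)) (T3 P (i-1)) (T3 P (i+1)) (T3 P (i+2))) \<noteq> 0"
    using assms(1) unfolding corner_finite_def pts by simp
  moreover define K where "K = - (s * t * (s * t') * det3 e (P (i+3)) b * (cross3 b e \<bullet> cross3 b e))"
  ultimately have chi_eqs:
    "chi_num (T3 P (i-2)) (T3 P (i-1)) (meet (T3 P (i-2)) (T3 P (i-1)) (T3 P i) (T3 P (i+1)))
       (meet (T3 P (i-2)) (T3 P (i-1)) (T3 P (i+1)) (T3 P (i+2)))
       = K * (meet_chi_num e b a d c f * det3 d g e)"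
    "chi_den (T3 P (i-2)) (T3 P (i-1)) (meet (T3 P (i-2)) (T3 P (i-1)) (T3 P i) (T3 P (i+1)))
       (meet (T3 P (i-2)) (T3 P (i-1)) (T3 P (i+1)) (T3 P (i+2)))
       = K * (meet_chi_num e b a d d g * det3 c f e)"
    unfolding coords K_def meet_chi_num_def by (simp_all add: algebra_simps)
  show "meet_chi_num e b a d d g * det3 c f e \<noteq> 0"
    using den_nz chi_eqs by simp
  show "corner (T3 P) (2*i) = meet_chi_num e b a d c f * det3 d g e / (meet_chi_num e b a d d g * det3 c f e)"
    using den_nz unfolding corner_def pts chi_def by (simp add: chi_eqs)
qed

lemma det3_components: "det3 x y z = x$1 * (y$2 * z$3 - y$3 * z$2) - x$2 * (y$1 * z$3 - y$3 * z$1) + x$3 * (y$1 * z$2 - y$2 * z$1)"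
  unfolding det3_def by (simp add: cross3_simps)

lemma T3_bracket_identity_std:
  fixes a c f g :: "real^3"
  defines "b \<equiv> axis 1 1" and "d \<equiv> axis 2 1" and "e \<equiv> axis 3 1"
  defines "N2 \<equiv> meet_chi_num b c d e e f" and "D2 \<equiv> meet_chi_den b c d e e f"
    and "N4 \<equiv> meet_chi_num a b c d d e" and "D4 \<equiv> meet_chi_den a b c d d e"
    and "N1 \<equiv> meet_chi_num f e d c c b" and "D1 \<equiv> meet_chi_den f e d c c b"
    and "Np \<equiv> meet_chi_num g f e d d c" and "Dp \<equiv> meet_chi_den g f e d d c"
  shows "meet_chi_num e b a d c f * det3 d g e * (N2 * N1 * Dp * D4 - (Dp - Np) * (D4 - N4) * D2 * D1)
       = meet_chi_num e b a d d g * det3 c f e * (N2 * Dp * (N4 * D1 + N1 * D4 - D4 * D1))"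
  unfolding assms meet_chi_num_def meet_chi_den_def det3_components
  by (simp add: axis_def) algebra

lemma frame_matrix:
  fixes b d e :: "real^3"
  defines "M \<equiv> transpose (vector [b, d, e])"
  shows "M *v axis 1 1 = b" "M *v axis 2 1 = d" "M *v axis 3 1 = e" "det M = det3 b d e"
  unfolding M_def det3_def
  by (simp_all add: vec_eq_iff matrix_vector_mult_def transpose_def axis_def sum_3 forall_3 vector_3
      det_3 cross3_simps)

lemma T3_bracket_identity:
  fixes a b c d e f g :: "real^3"
  assumes "det3 b d e \<noteq> 0"
  defines "N2 \<equiv> meet_chi_num b c d e e f" and "D2 \<equiv> meet_chi_den b c d e e f"
    and "N4 \<equiv> meet_chi_num a b c d d e" and "D4 \<equiv> meet_chi_den a b c d d e"
    and "N1 \<equiv> meet_chi_num f e d c c b" and "D1 \<equiv> meet_chi_den f e d c c b"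
    and "Np \<equiv> meet_chi_num g f e d d c" and "Dp \<equiv> meet_chi_den g f e d d c"
  shows "meet_chi_num e b a d c f * det3 d g e * (N2 * N1 * Dp * D4 - (Dp - Np) * (D4 - N4) * D2 * D1)
       = meet_chi_num e b a d d g * det3 c f e * (N2 * Dp * (N4 * D1 + N1 * D4 - D4 * D1))"
proof -
  define M :: "real^3^3" where "M = transpose (vector [b, d, e])"
  note frame = frame_matrix[of b d e, folded M_def]
  have inv: "invertible M"
    using assms(1) frame(4) by (simp add: invertible_det_nz)
  obtain M' where "M ** M' = mat 1"
    using inv unfolding invertible_def by blast
  then have pre: "M *v (M' *v v) = v" for v
    by (simp add: matrix_vector_mul_assoc)
  obtain a' c' f' g' where pts: "a = M *v a'" "c = M *v c'" "f = M *v f'" "g = M *v g'"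
    using pre by metis
  note std = T3_bracket_identity_std[of a' c' f' g']
  show ?thesis
    using std unfolding assms(2-) pts frame(1-3)[symmetric] meet_chi_num_def meet_chi_den_def
      det3_matrix_vector_mult
    by algebra
qed

lemma divide_eq_recurrence:
  fixes L1 L2 N1 D1 N2 D2 N4 D4 Np Dp :: real
  assumes "D1 \<noteq> 0" "D2 \<noteq> 0" "D4 \<noteq> 0" "Dp \<noteq> 0" "L2 \<noteq> 0"
    and "N2 / D2 * (N1 / D1) - (1 - Np / Dp) * (1 - N4 / D4) \<noteq> 0"
    and "L1 * (N2 * N1 * Dp * D4 - (Dp - Np) * (D4 - N4) * D2 * D1)
       = L2 * (N2 * Dp * (N4 * D1 + N1 * D4 - D4 * D1))"
  shows "L1 / L2 = N2 / D2 * (N4 / D4 + N1 / D1 - 1) / (N2 / D2 * (N1 / D1) - (1 - Np / Dp) * (1 - N4 / D4))"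
proof -
  define Q where "Q = N2 * N1 * Dp * D4 - (Dp - Np) * (D4 - N4) * D2 * D1"
  define R where "R = N2 * Dp * (N4 * D1 + N1 * D4 - D4 * D1)"
  define Z where "Z = D2 * D1 * Dp * D4"
  have Z: "Z \<noteq> 0"
    using assms(1-4) unfolding Z_def by simp
  have den: "N2 / D2 * (N1 / D1) - (1 - Np / Dp) * (1 - N4 / D4) = Q / Z"
    using assms(1-4) unfolding Q_def Z_def by (simp add: field_simps)
  have num: "N2 / D2 * (N4 / D4 + N1 / D1 - 1) = R / Z"
    using assms(1-4) unfolding R_def Z_def by (simp add: field_simps)
  have "Q \<noteq> 0"
    using assms(6) unfolding den by simp
  then have "L1 / L2 = R / Q"
    using assms(5,7) unfolding Q_def R_def by (simp add: frac_eq_eq mult.commute)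
  then show ?thesis
    unfolding num den using Z by simp
qed

lemma corner_T3_even:
  fixes P :: "int \<Rightarrow> real^3"
  assumes nondeg: "det3 (P (i-3)) (P (i-1)) (P i) \<noteq> 0"
    and fin: "corner_finite (T3 P) (2*i)" "corner_finite P (2*i-4)" "corner_finite P (2*i-2)"
      "corner_finite P (2*i-1)" "corner_finite P (2*i+1)"
    and den: "corner P (2*i-2) * corner P (2*i-1) - (1 - corner P (2*i+1)) * (1 - corner P (2*i-4)) \<noteq> 0"
  shows "corner (T3 P) (2*i) = corner P (2*i-2) * (corner P (2*i-4) + corner P (2*i-1) - 1) /
           (corner P (2*i-2) * corner P (2*i-1) - (1 - corner P (2*i+1)) * (1 - corner P (2*i-4)))"
proof -
  have idx: "i-1-2 = i-3" "i-1-1 = i-2" "i-1+1 = i" "i-1+2 = i+1" "2*(i-1) = 2*i-2"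
    "i-2-2 = i-4" "i-2-1 = i-3" "i-2+1 = i-1" "i-2+2 = i" "2*(i-2) = 2*i-4"
    "2*i-2+1 = 2*i-1" by simp_all
  note x4 = corner_even_eq[of P "i-2", unfolded idx, OF fin(2)]
  note x2 = corner_even_eq[of P "i-1", unfolded idx, OF fin(3)]
  note x1 = corner_odd_eq[of P "i-1", unfolded idx, OF fin(4)]
  note xp = corner_odd_eq[of P i, OF fin(5)]
  note x' = corner_T3_even_eq[OF fin(1)]
  show ?thesis
    unfolding x'(1) x4(1) x2(1) x1(1) xp(1)
    by (rule divide_eq_recurrence)
      (use x'(2) x4(2) x2(2) x1(2) xp(2) den[unfolded x4(1) x2(1) x1(1) xp(1)]
        T3_bracket_identity[OF nondeg] in simp_all)
qed

lemma corner_pts_reflect: "corner_pts (\<lambda>k. R (-k)) j = corner_pts R (1-j)"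
proof -
  have idx: "-(k-2) = -k+2" "-(k-1) = -k+1" "-(k+1) = -k-1" "-(k+2) = -k-2" for k :: int
    by simp_all
  show ?thesis
  proof (cases "even j")
    case True
    then obtain k where j: "j = 2*k" by (metis evenE)
    have "(1 - 2*k) div 2 = -k" "odd (1 - 2*k)" by presburger+
    then show ?thesis unfolding j corner_pts_def Let_def by (simp add: idx)
  next
    case False
    then obtain k where j: "j = 2*k+1" by (metis oddE)
    have "(1 - (2*k+1)) div 2 = -k" "even (1 - (2*k+1))" "(2*k+1) div 2 = k" by presburger+
    then show ?thesis unfolding j corner_pts_def Let_def by (simp add: idx)
  qed
qed

lemma corner_reflect:
  "corner (\<lambda>k. R (-k)) j = corner R (1-j)"
  "corner_finite (\<lambda>k. R (-k)) j = corner_finite R (1-j)"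
  unfolding corner_def corner_finite_def corner_pts_reflect by simp_all

lemma meet_uminus: "meet (-A) (-B) (-C) (-D) = meet A B C D"
  unfolding meet_def line_through_def by simp

lemma corner_uminus:
  "corner (\<lambda>k. - R k) j = corner R j"
  "corner_finite (\<lambda>k. - R k) j = corner_finite R j"
  unfolding corner_def corner_finite_def corner_pts_def Let_def
  by (simp_all add: meet_uminus chi_def chi_num_def chi_den_def)

lemma T3_reflect: "T3 (\<lambda>k. P (-k)) = (\<lambda>k. - T3 P (-k))"
proof
  fix k :: int
  have "-(k-2) = -k+2" "-(k-1) = -k+1" "-(k+1) = -k-1" "-(k+2) = -k-2" by simp_all
  then show "T3 (\<lambda>k. P (-k)) k = - T3 P (-k)"
    unfolding T3_def meet_def line_through_def
    by (metis (no_types) cross_skew cross_minus_left cross_minus_right diff_conv_add_uminus)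
qed

lemma corner_T3_reflect:
  "corner (T3 (\<lambda>k. P (-k))) j = corner (T3 P) (1-j)"
  "corner_finite (T3 (\<lambda>k. P (-k))) j = corner_finite (T3 P) (1-j)"
  unfolding T3_reflect corner_uminus[of "\<lambda>k. T3 P (-k)"] corner_reflect by simp_all

lemma corner_T3_odd:
  fixes P :: "int \<Rightarrow> real^3"
  assumes nondeg: "det3 (P (i+3)) (P (i+1)) (P i) \<noteq> 0"
    and fin: "corner_finite (T3 P) (2*i+1)" "corner_finite P (2*i)" "corner_finite P (2*i+2)"
      "corner_finite P (2*i+3)" "corner_finite P (2*i+5)"
    and den: "corner P (2*i+2) * corner P (2*i+3) - (1 - corner P (2*i+5)) * (1 - corner P (2*i)) \<noteq> 0"
  shows "corner (T3 P) (2*i+1) = corner P (2*i+3) * (corner P (2*i+2) + corner P (2*i+5) - 1) /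
           (corner P (2*i+2) * corner P (2*i+3) - (1 - corner P (2*i+5)) * (1 - corner P (2*i)))"
proof -
  define Q where "Q = (\<lambda>k. P (-k))"
  have idx: "1 - 2 * - i = 2*i+1" "1 - (2 * - i - 2) = 2*i+3" "1 - (2 * - i - 4) = 2*i+5"
     "1 - (2 * - i - 1) = 2*i+2" "1 - (2 * - i + 1) = 2*i"
    by simp_all
  have "corner (T3 Q) (2 * -i) = corner Q (2 * -i - 2) * (corner Q (2 * -i - 4) + corner Q (2 * -i - 1) - 1) /
      (corner Q (2 * -i - 2) * corner Q (2 * -i - 1) - (1 - corner Q (2 * -i + 1)) * (1 - corner Q (2 * -i - 4)))"
    using assms unfolding Q_def
    by (intro corner_T3_even) (simp_all add: corner_reflect corner_T3_reflect idx algebra_simps)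
  then show ?thesis
    unfolding Q_def corner_reflect corner_T3_reflect idx by (simp add: algebra_simps)
qed

lemma three_nice_det3:
  assumes "three_nice P"
  shows "det3 (P (i-3)) (P (i-1)) (P i) \<noteq> 0" "det3 (P (i+3)) (P (i+1)) (P i) \<noteq> 0"
proof -
  have "general_position4 (P (i-4)) (P (i-4+1)) (P (i-4+3)) (P (i-4+4))"
    using assms unfolding three_nice_def by blast
  then show "det3 (P (i-3)) (P (i-1)) (P i) \<noteq> 0"
    unfolding general_position4_def proj_collinear_def det3_def by simp
  have "general_position4 (P i) (P (i+1)) (P (i+3)) (P (i+4))"
    using assms unfolding three_nice_def by blast
  then show "det3 (P (i+3)) (P (i+1)) (P i) \<noteq> 0"
    unfolding general_position4_def proj_collinear_def det3_def by (simp add: cross3_simps)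
qed

theorem mainTheorem15:
  fixes n :: nat and P :: "int \<Rightarrow> real^3" and i :: int
  assumes "twisted_ngon n P" and "three_nice P"
  defines "x \<equiv> corner P" and "x' \<equiv> corner (T3 P)"
  shows "(corner_finite (T3 P) (2*i) \<and>
          (\<forall>j \<in> {2*i-4, 2*i-2, 2*i-1, 2*i+1}. corner_finite P j) \<and>
          x (2*i-2) * x (2*i-1) - (1 - x (2*i+1)) * (1 - x (2*i-4)) \<noteq> 0
          \<longrightarrow> x' (2*i) = x (2*i-2) * (x (2*i-4) + x (2*i-1) - 1) /
                 (x (2*i-2) * x (2*i-1) - (1 - x (2*i+1)) * (1 - x (2*i-4))))
       \<and> (corner_finite (T3 P) (2*i+1) \<and>
          (\<forall>j \<in> {2*i, 2*i+2, 2*i+3, 2*i+5}. corner_finite P j) \<and>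
          x (2*i+2) * x (2*i+3) - (1 - x (2*i+5)) * (1 - x (2*i)) \<noteq> 0
          \<longrightarrow> x' (2*i+1) = x (2*i+3) * (x (2*i+2) + x (2*i+5) - 1) /
                 (x (2*i+2) * x (2*i+3) - (1 - x (2*i+5)) * (1 - x (2*i))))"
  unfolding x_def x'_def
  using corner_T3_even[OF three_nice_det3(1)[OF assms(2)]]
    corner_T3_odd[OF three_nice_det3(2)[OF assms(2)]]
  by simp

end
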